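(* For every $\alpha\in(0,1)$ and $\theta\in\mathbb R$, the elementary expectile scoring function $\mathrm S^{\rm E}_{\alpha,\theta}$ belongs to $\mathcal S^{\rm E}_{\alpha,1}$ and is an extreme point of $\mathcal S^{\rm E}_{\alpha,1}$: if $\mathrm S^{\rm E}_{\alpha,\theta}=(\mathrm S_1+\mathrm S_2)/2$ pointwise on $\mathbb R^2$ with $\mathrm S_1,\mathrm S_2\in\mathcal S^{\rm E}_{\alpha,1}$, then $\mathrm S_1=\mathrm S_2=\mathrm S^{\rm E}_{\alpha,\theta}$.
   Context: $\mathbb 1(A)$ denotes the indicator of $A$ and $(t)_+=\max(t,0)$. $\mathcal I$ is the class of left-continuous non-decreasing functions $\mathbb R\to\mathbb R$, and $\mathcal I_1=\{g\in\mathcal I:\lim_{x\to-\infty}g(x)=0,\ \lim_{x\to+\infty}g(x)=1\}$. For a convex $\phi:\mathbb R\to\mathbb R$, $\phi'$ denotes its left-hand derivative. $\mathcal C_1$ is the class of convex $\phi:\mathbb R\to\mathbb R$ with $\phi(0)=0$ and $\phi'\in\mathcal I_1$. For $\alpha\in(0,1)$, $\mathcal S^{\rm E}_{\alpha,1}$ is the (convex) class of all functions of the form $\mathrm S(x,y)=|\mathbb 1(y<x)-\alpha|\,(\phi(y)-\phi(x)-\phi'(x)(y-x))$ with $\phi\in\mathcal C_1$. The elementary expectile scoring function is $\mathrm S^{\rm E}_{\alpha,\theta}(x,y)=|\mathbb 1(y<x)-\alpha|\big((y-\theta)_+-(x-\theta)_+-(y-x)\mathbb 1(\theta<x)\big)$,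 i.e. it equals $(1-\alpha)|y-\theta|$ if $y\le\theta<x$, $\alpha|y-\theta|$ if $x\le\theta<y$, and $0$ otherwise. *)

theory Defs
  imports "HOL-Analysis.Analysis"
begin

text \<open>Left-hand derivative of a real function (for convex functions this limit exists).\<close>
definition left_deriv :: "(real \<Rightarrow> real) \<Rightarrow> real \<Rightarrow> real" where
  "left_deriv \<phi> x = Lim (at_left x) (\<lambda>y. (\<phi> y - \<phi> x) / (y - x))"

definition class_I :: "(real \<Rightarrow> real) set" where
  "class_I = {g. mono g \<and> (\<forall>x. continuous (at_left x) g)}"

definition class_I1 :: "(real \<Rightarrow> real) set" where
  "class_I1 = {g \<in> class_I. (g \<longlongrightarrow> 0) at_bot \<and> (g \<longlongrightarrow> 1) at_top}"

definition class_C1 :: "(real \<Rightarrow> real) set" where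
  "class_C1 = {\<phi>. convex_on UNIV \<phi> \<and> \<phi> 0 = 0 \<and> left_deriv \<phi> \<in> class_I1}"

definition ind :: "bool \<Rightarrow> real" where
  "ind P = (if P then 1 else 0)"

definition S_E :: "real \<Rightarrow> (real \<Rightarrow> real) \<Rightarrow> real \<Rightarrow> real \<Rightarrow> real" where
  "S_E \<alpha> \<phi> x y = \<bar>ind (y < x) - \<alpha>\<bar> * (\<phi> y - \<phi> x - left_deriv \<phi> x * (y - x))"

definition class_SE1 :: "real \<Rightarrow> (real \<Rightarrow> real \<Rightarrow> real) set" where
  "class_SE1 \<alpha> = {S. \<exists>\<phi>\<in>class_C1. S = S_E \<alpha> \<phi>}"

definition S_elem :: "real \<Rightarrow> real \<Rightarrow> real \<Rightarrow> real \<Rightarrow> real" where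
  "S_elem \<alpha> \<theta> x y = \<bar>ind (y < x) - \<alpha>\<bar> *
     (max (y - \<theta>) 0 - max (x - \<theta>) 0 - (y - x) * ind (\<theta> < x))"

end

theory Submission
  imports Defs
begin

text \<open>
  A score in the class is a positive weight times the Bregman divergence of \<open>\<phi>\<close>, which is
  nonnegative since the left derivative of a convex function is a subgradient. The elementary
  score comes from the hinge \<open>\<phi> y = (y - \<theta>)\<^sub>+ - (-\<theta>)\<^sub>+\<close>, whose divergence vanishes for \<open>x, y\<close>
  on the same side of \<open>\<theta>\<close>. If it is the midpoint of two scores, their divergences vanish there
  too, so \<open>\<phi>'\<close> is constant on each side of \<open>\<theta>\<close>, hence equal to \<open>0\<close> and \<open>1\<close> by its limits at
  \<open>\<plusminus>\<infinity>\<close>; continuity at \<open>\<theta>\<close> and \<open>\<phi> 0 = 0\<close> then pin \<open>\<phi>\<close> down to the hinge.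
\<close>

lemma convex_on_slope_left_mono:
  fixes f :: "real \<Rightarrow> real"
  assumes "convex_on UNIV f" "a \<le> b" "b < x"
  shows "(f a - f x) / (a - x) \<le> (f b - f x) / (b - x)"
proof (cases "a = b")
  case False
  then show ?thesis using convex_on_slope_le(2)[OF assms(1), of a x b] assms by auto
qed simp

lemma convex_on_slope_left_le_right:
  fixes f :: "real \<Rightarrow> real"
  assumes "convex_on UNIV f" "b < x" "x < y"
  shows "(f b - f x) / (b - x) \<le> (f y - f x) / (y - x)"
proof -
  have "(f b - f x) / (b - x) \<le> (f b - f y) / (b - y)"
    using convex_on_slope_le(1)[OF assms(1), of b y x] assms by auto
  also have "\<dots> \<le> (f x - f y) / (x - y)"
    using convex_on_slope_le(2)[OF assms(1), of b y x] assms by auto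
  also have "\<dots> = (f y - f x) / (y - x)"
    by (simp add: divide_simps) (auto simp: algebra_simps)
  finally show ?thesis .
qed

lemma left_deriv_eqI:
  assumes "((\<lambda>y. (f y - f x) / (y - x)) \<longlongrightarrow> l) (at_left x)"
  shows "left_deriv f x = l"
  unfolding left_deriv_def using assms by (intro tendsto_Lim) (auto simp: trivial_limit_at_left_real)

lemma convex_on_left_deriv_Sup:
  fixes f :: "real \<Rightarrow> real"
  assumes "convex_on UNIV f"
  shows "left_deriv f x = Sup ((\<lambda>y. (f y - f x) / (y - x)) ` {..<x})"
proof (rule left_deriv_eqI)
  have "((\<lambda>y. (f y - f x) / (y - x)) \<longlongrightarrow> Sup ((\<lambda>y. (f y - f x) / (y - x)) ` ({..<x} \<inter> UNIV)))
          (at x within ({..<x} \<inter> UNIV))"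
    using convex_on_slope_left_mono[OF assms] convex_on_slope_left_le_right[OF assms, of _ x "x + 1"]
    by (intro Lim_left_bound[where K = "(f (x + 1) - f x) / ((x + 1) - x)"]) auto
  then show "((\<lambda>y. (f y - f x) / (y - x)) \<longlongrightarrow> Sup ((\<lambda>y. (f y - f x) / (y - x)) ` {..<x})) (at_left x)"
    by simp
qed

lemma convex_on_left_deriv_subgradient:
  fixes f :: "real \<Rightarrow> real"
  assumes cv: "convex_on UNIV f"
  shows "f x + left_deriv f x * (y - x) \<le> f y"
proof -
  define s where "s = (\<lambda>y. (f y - f x) / (y - x))"
  have ld: "left_deriv f x = Sup (s ` {..<x})"
    using convex_on_left_deriv_Sup[OF cv] by (simp add: s_def)
  consider "y < x" | "y = x" | "x < y" by linarith
  then show ?thesis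
  proof cases
    case 1
    have "bdd_above (s ` {..<x})"
      using convex_on_slope_left_le_right[OF cv, of _ x "x + 1"]
      by (intro bdd_aboveI2[where M = "s (x + 1)"]) (auto simp: s_def)
    then have "s y \<le> left_deriv f x" unfolding ld using 1 by (intro cSup_upper) auto
    with 1 show ?thesis by (simp add: s_def divide_le_eq mult.commute)
  next
    case 3
    have "left_deriv f x \<le> s y"
      unfolding ld using convex_on_slope_left_le_right[OF cv _ 3]
      by (intro cSup_least) (auto simp: s_def)
    with 3 show ?thesis by (simp add: s_def le_divide_eq)
  qed simp
qed

definition bregman :: "(real \<Rightarrow> real) \<Rightarrow> real \<Rightarrow> real \<Rightarrow> real" where
  "bregman \<phi> x y = \<phi> y - \<phi> x - left_deriv \<phi> x * (y - x)"

lemma S_E_eq_bregman: "S_E \<alpha> \<phi> x y = \<bar>ind (y < x) - \<alpha>\<bar> * bregman \<phi> x y"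
  by (simp add: S_E_def bregman_def)

lemma bregman_nonneg: "convex_on UNIV \<phi> \<Longrightarrow> 0 \<le> bregman \<phi> x y"
  using convex_on_left_deriv_subgradient[of \<phi> x y] by (simp add: bregman_def)

lemma left_deriv_eq_if_bregman_eq_0:
  assumes "bregman \<phi> x y = 0" "bregman \<phi> y x = 0"
  shows "left_deriv \<phi> x = left_deriv \<phi> y"
proof (cases "x = y")
  case False
  from assms have "(left_deriv \<phi> x - left_deriv \<phi> y) * (y - x) = 0"
    by (simp add: bregman_def algebra_simps)
  with False show ?thesis by simp
qed simp

definition hinge :: "real \<Rightarrow> real \<Rightarrow> real" where
  "hinge \<theta> y = max (y - \<theta>) 0 - max (- \<theta>) 0"

lemma left_deriv_hinge: "left_deriv (hinge \<theta>) x = ind (\<theta> < x)"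
proof (rule left_deriv_eqI, rule tendsto_eventually)
  define a where "a = (if \<theta> < x then \<theta> else x - 1)"
  have "\<forall>\<^sub>F y in at_left x. y \<in> {a<..<x}"
    by (rule eventually_at_left_real) (simp add: a_def)
  then show "\<forall>\<^sub>F y in at_left x. (hinge \<theta> y - hinge \<theta> x) / (y - x) = ind (\<theta> < x)"
    by (rule eventually_mono) (auto simp: a_def hinge_def ind_def split: if_splits)
qed

lemma convex_on_hinge: "convex_on UNIV (hinge \<theta>)"
  by (rule pos_convex_function[where f' = "\<lambda>x. ind (\<theta> < x)"]) (auto simp: hinge_def ind_def)

lemma ind_gt_in_class_I1: "(\<lambda>x. ind (\<theta> < x)) \<in> class_I1"
proof -
  have "continuous (at_left x) (\<lambda>x. ind (\<theta> < x))" for x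
  proof -
    define a where "a = (if \<theta> < x then \<theta> else x - 1)"
    have "\<forall>\<^sub>F y in at_left x. y \<in> {a<..<x}"
      by (rule eventually_at_left_real) (simp add: a_def)
    then have "\<forall>\<^sub>F y in at_left x. ind (\<theta> < y) = ind (\<theta> < x)"
      by (rule eventually_mono) (auto simp: a_def ind_def split: if_splits)
    then show ?thesis unfolding continuous_within by (rule tendsto_eventually)
  qed
  moreover have "((\<lambda>x. ind (\<theta> < x)) \<longlongrightarrow> 0) at_bot"
    by (rule tendsto_eventually, unfold eventually_at_bot_linorder, intro exI[of _ \<theta>])
      (auto simp: ind_def)
  moreover have "((\<lambda>x. ind (\<theta> < x)) \<longlongrightarrow> 1) at_top"
    by (rule tendsto_eventually, unfold eventually_at_top_linorder, intro exI[of _ "\<theta> + 1"])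
      (auto simp: ind_def)
  moreover have "mono (\<lambda>x. ind (\<theta> < x))"
    by (auto simp: mono_def ind_def)
  ultimately show ?thesis by (auto simp: class_I1_def class_I_def)
qed

lemma hinge_in_class_C1: "hinge \<theta> \<in> class_C1"
proof -
  have "left_deriv (hinge \<theta>) = (\<lambda>x. ind (\<theta> < x))"
    by (simp add: fun_eq_iff left_deriv_hinge)
  then show ?thesis
    using convex_on_hinge ind_gt_in_class_I1 by (simp add: class_C1_def hinge_def)
qed

lemma S_E_hinge: "S_E \<alpha> (hinge \<theta>) = S_elem \<alpha> \<theta>"
  by (auto simp: fun_eq_iff S_E_def S_elem_def left_deriv_hinge hinge_def algebra_simps)

lemma bregman_hinge_eq_0:
  assumes "x \<le> \<theta> \<and> y \<le> \<theta> \<or> \<theta> < x \<and> \<theta> < y"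
  shows "bregman (hinge \<theta>) x y = 0"
  using assms by (auto simp: bregman_def left_deriv_hinge hinge_def ind_def)

lemma left_deriv_eq_ind_if_bregman_flat:
  assumes "\<phi> \<in> class_C1"
    and flat: "\<And>x y. x \<le> \<theta> \<and> y \<le> \<theta> \<or> \<theta> < x \<and> \<theta> < y \<Longrightarrow> bregman \<phi> x y = 0"
  shows "left_deriv \<phi> x = ind (\<theta> < x)"
proof -
  let ?L = "left_deriv \<phi>"
  have lim_bot: "(?L \<longlongrightarrow> 0) at_bot" and lim_top: "(?L \<longlongrightarrow> 1) at_top"
    using assms(1) by (auto simp: class_C1_def class_I1_def)
  have same_side: "?L z = ?L x" if "x \<le> \<theta> \<and> z \<le> \<theta> \<or> \<theta> < x \<and> \<theta> < z" for x z
  proof (rule left_deriv_eq_if_bregman_eq_0)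
    show "bregman \<phi> z x = 0" "bregman \<phi> x z = 0"
      by (rule flat, use that in linarith)+
  qed
  show ?thesis
  proof (cases "\<theta> < x")
    case True
    have "\<forall>\<^sub>F z in at_top. ?L z = ?L x"
      unfolding eventually_at_top_linorder using True by (intro exI[of _ x] allI impI same_side) auto
    then have "(?L \<longlongrightarrow> ?L x) at_top" by (rule tendsto_eventually)
    with lim_top have "?L x = 1" using tendsto_unique[OF trivial_limit_at_top_linorder] by blast
    with True show ?thesis by (simp add: ind_def)
  next
    case False
    have "\<forall>\<^sub>F z in at_bot. ?L z = ?L x"
      unfolding eventually_at_bot_linorder using False by (intro exI[of _ x] allI impI same_side) auto
    then have "(?L \<longlongrightarrow> ?L x) at_bot" by (rule tendsto_eventually)
    with lim_bot have "?L x = 0" using tendsto_unique[OF trivial_limit_at_bot_linorder] by blast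
    with False show ?thesis by (simp add: ind_def)
  qed
qed

lemma eq_hinge_if_bregman_flat:
  assumes C: "\<phi> \<in> class_C1"
    and flat: "\<And>x y. x \<le> \<theta> \<and> y \<le> \<theta> \<or> \<theta> < x \<and> \<theta> < y \<Longrightarrow> bregman \<phi> x y = 0"
  shows "\<phi> = hinge \<theta>"
proof -
  have affine: "\<phi> y = \<phi> x + ind (\<theta> < x) * (y - x)" if "x \<le> \<theta> \<and> y \<le> \<theta> \<or> \<theta> < x \<and> \<theta> < y" for x y
    using flat[OF that] left_deriv_eq_ind_if_bregman_flat[OF C flat] by (simp add: bregman_def)
  have below: "\<phi> y = \<phi> \<theta>" if "y \<le> \<theta>" for y
    using affine[of \<theta> y] that by (simp add: ind_def)
  define c where "c = \<phi> (\<theta> + 1) - (\<theta> + 1)"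
  have above: "\<phi> y = c + y" if "\<theta> < y" for y
    using affine[of "\<theta> + 1" y] that by (simp add: c_def ind_def)
  have "continuous_on UNIV \<phi>"
    using C by (intro convex_on_continuous) (auto simp: class_C1_def)
  then have "isCont \<phi> \<theta>" by (simp add: continuous_on_eq_continuous_at)
  then have "(\<phi> \<longlongrightarrow> \<phi> \<theta>) (at_right \<theta>)" by (simp add: continuous_at filterlim_at_split)
  moreover have "(\<phi> \<longlongrightarrow> c + \<theta>) (at_right \<theta>)"
  proof (rule Lim_transform_eventually)
    show "((\<lambda>y. c + y) \<longlongrightarrow> c + \<theta>) (at_right \<theta>)" by (intro tendsto_intros)
    show "\<forall>\<^sub>F y in at_right \<theta>. c + y = \<phi> y"
      using eventually_at_right_less by (rule eventually_mono) (simp add: above)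
  qed
  ultimately have "\<phi> \<theta> = c + \<theta>"
    using tendsto_unique[OF trivial_limit_at_right_real] by blast
  then have shape: "\<phi> y = \<phi> \<theta> + max (y - \<theta>) 0" for y
    using below[of y] above[of y] by (cases "y \<le> \<theta>") auto
  have "\<phi> 0 = 0" using C by (simp add: class_C1_def)
  with shape[of 0] have "\<phi> \<theta> = - max (- \<theta>) 0" by simp
  then have "\<phi> y = hinge \<theta> y" for y using shape[of y] by (simp add: hinge_def)
  then show ?thesis by blast
qed

theorem mainTheorem4:
  fixes \<alpha> \<theta> :: real
  assumes "0 < \<alpha>" and "\<alpha> < 1"
  shows "S_elem \<alpha> \<theta> \<in> class_SE1 \<alpha> \<and>
    (\<forall>S1 \<in> class_SE1 \<alpha>. \<forall>S2 \<in> class_SE1 \<alpha>.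
       (\<forall>x y. S_elem \<alpha> \<theta> x y = (S1 x y + S2 x y) / 2) \<longrightarrow>
       S1 = S_elem \<alpha> \<theta> \<and> S2 = S_elem \<alpha> \<theta>)"
proof (intro conjI ballI impI)
  show "S_elem \<alpha> \<theta> \<in> class_SE1 \<alpha>"
    unfolding class_SE1_def using hinge_in_class_C1 S_E_hinge[symmetric] by blast
next
  fix S1 S2 assume "S1 \<in> class_SE1 \<alpha>" "S2 \<in> class_SE1 \<alpha>"
    and mid: "\<forall>x y. S_elem \<alpha> \<theta> x y = (S1 x y + S2 x y) / 2"
  then obtain \<phi>1 \<phi>2 where C: "\<phi>1 \<in> class_C1" "\<phi>2 \<in> class_C1"
    and S: "S1 = S_E \<alpha> \<phi>1" "S2 = S_E \<alpha> \<phi>2" by (auto simp: class_SE1_def)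
  have sum: "bregman \<phi>1 x y + bregman \<phi>2 x y = 2 * bregman (hinge \<theta>) x y" for x y
  proof -
    define w where "w = \<bar>ind (y < x) - \<alpha>\<bar>"
    have "w > 0" using assms by (auto simp: w_def ind_def)
    moreover have "w * (bregman \<phi>1 x y + bregman \<phi>2 x y) = w * (2 * bregman (hinge \<theta>) x y)"
      using mid[rule_format, of x y]
      by (simp add: w_def S S_E_hinge[symmetric] S_E_eq_bregman algebra_simps)
    ultimately show ?thesis by simp
  qed
  have "bregman \<phi>1 x y = 0 \<and> bregman \<phi>2 x y = 0" if "x \<le> \<theta> \<and> y \<le> \<theta> \<or> \<theta> < x \<and> \<theta> < y" for x y
    using sum[of x y] bregman_hinge_eq_0[OF that] C bregman_nonneg[of \<phi>1 x y] bregman_nonneg[of \<phi>2 x y]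
    by (simp add: class_C1_def)
  then have "\<phi>1 = hinge \<theta>" "\<phi>2 = hinge \<theta>"
    using eq_hinge_if_bregman_flat C by blast+
  then show "S1 = S_elem \<alpha> \<theta>" "S2 = S_elem \<alpha> \<theta>" by (simp_all add: S S_E_hinge)
qed

end
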